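(* Let $X$ be an irreducible affine algebraic variety over an algebraically closed field $k$ whose coordinate ring $k[X]$ is factorial. Let $W$ be a finite-dimensional vector space over $k$ and $\varphi_1,\dots,\varphi_n,\psi:X\to W$ morphisms of algebraic varieties such that the set $O=\{x\in X\mid \varphi_1(x),\dots,\varphi_n(x)\text{ are linearly independent}\}$ is nonempty, while for each $x\in X$ the $n+1$ vectors $\varphi_1(x),\dots,\varphi_n(x),\psi(x)$ are linearly dependent. Then there exist $p_1,\dots,p_n,p_0\in k[X]$ with $\gcd(p_1,\dots,p_n,p_0)=1$ and $p_0(x)\psi(x)=\sum_{i=1}^n p_i(x)\varphi_i(x)$ for all $x\in X$. Moreover, for functions $h_1,\dots,h_n,h_0\in k[X]$ the equality $h_0(x)\psi(x)=\sum_{i=1}^n h_i(x)\varphi_i(x)$ holds identically on $X$ if and only if there is $g\in k[X]$ with $h_i=gp_i$ for all $i=0,1,\dots,n$. *)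

theory Defs
  imports "HOL-Algebra.Ring_Divisibility"
begin

definition alg_closed :: "'k::field itself \<Rightarrow> bool" where
  "alg_closed _ \<longleftrightarrow> (\<forall>(n::nat) (c::nat \<Rightarrow> 'k). n \<ge> 1 \<longrightarrow>
      (\<exists>z. z ^ n + (\<Sum>i<n. c i * z ^ i) = 0))"

definition fun_ring :: "('x \<Rightarrow> 'k::field) set \<Rightarrow> ('x \<Rightarrow> 'k) ring" where
  "fun_ring A = \<lparr> carrier = A, monoid.mult = (\<lambda>f g x. f x * g x), one = (\<lambda>_. 1),
                  zero = (\<lambda>_. 0), add = (\<lambda>f g x. f x + g x) \<rparr>"

inductive_set alg_gen :: "('x \<Rightarrow> 'k::field) set \<Rightarrow> ('x \<Rightarrow> 'k) set" for G where
  const: "(\<lambda>_. c) \<in> alg_gen G"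
| gen: "g \<in> G \<Longrightarrow> g \<in> alg_gen G"
| add: "f \<in> alg_gen G \<Longrightarrow> g \<in> alg_gen G \<Longrightarrow> (\<lambda>x. f x + g x) \<in> alg_gen G"
| mult: "f \<in> alg_gen G \<Longrightarrow> g \<in> alg_gen G \<Longrightarrow> (\<lambda>x. f x * g x) \<in> alg_gen G"

text \<open>A is the coordinate ring k[X] of an affine variety whose set of points is the type 'x:
  A is a finitely generated k-algebra of functions X \<rightarrow> k that separates points, and every
  k-algebra homomorphism A \<rightarrow> k is evaluation at a point of X (i.e. X = Specm k[X]).\<close>
definition affine_coord_ring :: "('x \<Rightarrow> 'k::field) set \<Rightarrow> bool" where
  "affine_coord_ring A \<longleftrightarrow>
     (\<exists>G. finite G \<and> G \<subseteq> A \<and> A = alg_gen G) \<and>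
     (\<forall>x y. x \<noteq> y \<longrightarrow> (\<exists>f\<in>A. f x \<noteq> f y)) \<and>
     (\<forall>h :: ('x \<Rightarrow> 'k) \<Rightarrow> 'k.
        ((\<forall>c. h (\<lambda>_. c) = c) \<and>
         (\<forall>f\<in>A. \<forall>g\<in>A. h (\<lambda>x. f x + g x) = h f + h g) \<and>
         (\<forall>f\<in>A. \<forall>g\<in>A. h (\<lambda>x. f x * g x) = h f * h g))
        \<longrightarrow> (\<exists>x. \<forall>f\<in>A. h f = f x))"

text \<open>Vectors in W = k^m are given by their coordinates j < m. Linear independence of the
  family v 1, ..., v n.\<close>
definition lin_indep :: "nat \<Rightarrow> nat \<Rightarrow> (nat \<Rightarrow> nat \<Rightarrow> 'k::field) \<Rightarrow> bool" where
  "lin_indep m n v \<longleftrightarrow> (\<forall>c::nat \<Rightarrow> 'k.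
      (\<forall>j<m. (\<Sum>i=1..n. c i * v i j) = 0) \<longrightarrow> (\<forall>i\<in>{1..n}. c i = 0))"

definition lin_dep_with :: "nat \<Rightarrow> nat \<Rightarrow> (nat \<Rightarrow> nat \<Rightarrow> 'k::field) \<Rightarrow> (nat \<Rightarrow> 'k) \<Rightarrow> bool" where
  "lin_dep_with m n v w \<longleftrightarrow> (\<exists>(c::nat \<Rightarrow> 'k) c0. (c0 \<noteq> 0 \<or> (\<exists>i\<in>{1..n}. c i \<noteq> 0)) \<and>
      (\<forall>j<m. c0 * w j + (\<Sum>i=1..n. c i * v i j) = 0))"

end

theory Submission
  imports Defs "Jordan_Normal_Form.Determinant" "HOL-Library.Function_Algebras"
begin

(* Choose a point x0 where phi_1, ..., phi_n are independent and linear functionals B_1, ..., B_n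
   with B_k (phi_i x0) = delta_ki. The determinant D = det (B_k (phi_i x)) is a regular function
   with D x0 = 1; wherever D x is nonzero the phi_i x are independent, and Cramer's rule applied to
   the dependence of phi_1 x, ..., phi_n x, psi x gives D psi = sum_i D_i phi_i with regular
   Cramer determinants D_i. As k[X] is a domain, an identity of regular functions that holds off
   the zeros of D holds everywhere. Among the relations h_0 psi = sum_i h_i phi_i with h_0 nonzero,
   one, p, with p_0 minimal for divisibility is coprime, since a common factor could be cancelled.
   For any relation h, independence off the zeros of D gives p_0 h_i = h_0 p_i, so p_0 divides
   every h_0 p_i, and unique factorization yields p_0 dvd h_0. *)

section \<open>Coprime families in factorial domains\<close>

definition coprime_family :: "('a, 'b) monoid_scheme \<Rightarrow> 'i set \<Rightarrow> ('i \<Rightarrow> 'a) \<Rightarrow> bool" where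
  "coprime_family R I c \<longleftrightarrow> (\<forall>d\<in>carrier R. (\<forall>i\<in>I. d divides\<^bsub>R\<^esub> c i) \<longrightarrow> d \<in> Units R)"

lemma (in monoid) prime_divides_if_coprime_family:
  assumes "Divisibility.prime G q" "coprime_family G I c" "q \<in> carrier G" "b \<in> carrier G"
    and "\<And>i. i \<in> I \<Longrightarrow> c i \<in> carrier G" "\<And>i. i \<in> I \<Longrightarrow> q divides b \<otimes> c i"
  shows "q divides b"
proof -
  obtain k where "k \<in> I" "\<not> q divides c k"
    using assms(1-3) unfolding Divisibility.prime_def coprime_family_def by blast
  then show ?thesis
    using assms(1,4-6) unfolding Divisibility.prime_def by blast
qed

lemma (in domain) prod_primes_divides_if_coprime_family:
  assumes "set fs \<subseteq> carrier R - {\<zero>}" "\<forall>q\<in>set fs. Divisibility.prime R q"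
    and "coprime_family R I c" "\<And>i. i \<in> I \<Longrightarrow> c i \<in> carrier R" "b \<in> carrier R"
    and "\<And>i. i \<in> I \<Longrightarrow> foldr (\<otimes>) fs \<one> divides b \<otimes> c i"
  shows "foldr (\<otimes>) fs \<one> divides b"
  using assms(1,2,5,6)
proof (induction fs arbitrary: b)
  case Nil
  then show ?case by (simp add: one_divides)
next
  case (Cons q fs)
  let ?a = "foldr (\<otimes>) fs \<one>"
  have q: "q \<in> carrier R" "q \<noteq> \<zero>" "Divisibility.prime R q" and a: "?a \<in> carrier R"
    using Cons.prems(1,2) by auto
  have "q divides b"
  proof (rule prime_divides_if_coprime_family[OF q(3) assms(3) q(1) Cons.prems(3) assms(4)])
    fix i assume "i \<in> I"
    have "q divides q \<otimes> ?a"
      using q(1) a by (auto simp: factor_def)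
    then show "q divides b \<otimes> c i"
      using Cons.prems(4)[OF \<open>i \<in> I\<close>] divides_trans q(1) by auto
  qed
  then obtain b' where b': "b' \<in> carrier R" "b = q \<otimes> b'"
    by (auto simp: factor_def)
  have "?a divides b'"
  proof (rule Cons.IH)
    fix i assume i: "i \<in> I"
    have "q \<otimes> ?a divides q \<otimes> (b' \<otimes> c i)"
      using Cons.prems(4)[OF i] b' assms(4)[OF i] q(1) by (simp add: m_assoc)
    then show "?a divides b' \<otimes> c i"
      using mult_divides a b' assms(4)[OF i] q by auto
  qed (use Cons.prems b' in auto)
  then show ?case
    using divides_mult[OF a q(1)] b' by simp
qed

lemma (in factorial_domain) divides_if_coprime_family:
  assumes "a \<in> carrier R" "a \<noteq> \<zero>" "b \<in> carrier R"
    and "coprime_family R I c" "\<And>i. i \<in> I \<Longrightarrow> c i \<in> carrier R"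
    and "\<And>i. i \<in> I \<Longrightarrow> a divides b \<otimes> c i"
  shows "a divides b"
proof (cases "a \<in> Units R")
  case True
  then show ?thesis using assms(3) by (rule unit_divides)
next
  case False
  then obtain fs where fs: "set fs \<subseteq> carrier R - {\<zero>}" "factors (mult_of R) fs a"
    using factors_exist[of a] assms(1,2) by auto
  have "\<forall>q\<in>set fs. Divisibility.prime R q"
    using fs irreducible_prime prime_eq_prime_mult by (auto simp: factors_def)
  moreover have "a = foldr (\<otimes>) fs \<one>"
    using fs(2) by (simp add: factors_def)
  ultimately show ?thesis
    using prod_primes_divides_if_coprime_family[OF fs(1) _ assms(4,5,3)] assms(6) by simp
qed

lemma (in factorial_domain) exists_coprime_member:
  assumes "q \<in> S" "i0 \<in> I" "q i0 \<noteq> \<zero>"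
    and carrier: "\<And>q i. q \<in> S \<Longrightarrow> i \<in> I \<Longrightarrow> q i \<in> carrier R"
    and closed: "\<And>q d e. q \<in> S \<Longrightarrow> d \<in> carrier R - {\<zero>} \<Longrightarrow>
       (\<And>i. i \<in> I \<Longrightarrow> e i \<in> carrier R \<and> q i = d \<otimes> e i) \<Longrightarrow> e \<in> S"
  shows "\<exists>p\<in>S. p i0 \<noteq> \<zero> \<and> coprime_family R I p"
proof -
  let ?T = "(\<lambda>q. q i0) ` {q \<in> S. q i0 \<noteq> \<zero>}"
  obtain z where "z \<in> ?T"
    and z_min: "\<And>y. (y, z) \<in> {(x, y). x \<in> carrier (mult_of R) \<and> y \<in> carrier (mult_of R) \<and>
        properfactor (mult_of R) x y} \<Longrightarrow> y \<notin> ?T"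
    using wfE_min[OF division_wellfounded, of "q i0" ?T] assms(1,3) by blast
  then obtain p where p: "p \<in> S" "p i0 \<noteq> \<zero>" "z = p i0"
    by blast
  have "d \<in> Units R" if d: "d \<in> carrier R" "\<forall>i\<in>I. d divides p i" for d
  proof (rule ccontr)
    assume nonunit: "d \<notin> Units R"
    obtain e where e: "\<And>i. i \<in> I \<Longrightarrow> e i \<in> carrier R \<and> p i = d \<otimes> e i"
      using d(2) unfolding factor_def by metis
    have "d \<noteq> \<zero>" "e i0 \<noteq> \<zero>"
      using e[OF assms(2)] p(2) d(1) by auto
    then have "e \<in> S"
      using closed[OF p(1)] d(1) e by blast
    moreover have "properfactor (mult_of R) (e i0) (p i0)"
      using mult_of.properfactorI3[of "p i0" "e i0" d] e[OF assms(2)] d(1) nonunit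
        \<open>d \<noteq> \<zero>\<close> \<open>e i0 \<noteq> \<zero>\<close> carrier[OF p(1) assms(2)] m_comm by auto
    ultimately show False
      using z_min[of "e i0"] p carrier[OF p(1) assms(2)] e[OF assms(2)] \<open>e i0 \<noteq> \<zero>\<close> by auto
  qed
  then show ?thesis
    using p unfolding coprime_family_def by blast
qed

section \<open>Rings of functions\<close>

lemma fun_ring_simps [simp]:
  "carrier (fun_ring A) = A"
  "\<zero>\<^bsub>fun_ring A\<^esub> = (\<lambda>_. 0)"
  "\<one>\<^bsub>fun_ring A\<^esub> = (\<lambda>_. 1)"
  "f \<otimes>\<^bsub>fun_ring A\<^esub> g = (\<lambda>x. f x * g x)"
  "f \<oplus>\<^bsub>fun_ring A\<^esub> g = (\<lambda>x. f x + g x)"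
  by (simp_all add: fun_ring_def)

lemma divides_fun_ring_iff:
  "a divides\<^bsub>fun_ring A\<^esub> b \<longleftrightarrow> (\<exists>c\<in>A. b = (\<lambda>x. a x * c x))"
  by (simp add: factor_def)

locale fun_domain =
  fixes A :: "('x \<Rightarrow> 'k::field) set"
  assumes const_mem: "(\<lambda>_. c) \<in> A"
    and domain: "domain (fun_ring A)"
begin

sublocale R: domain "fun_ring A"
  by (fact domain)

lemma add_mem: "f \<in> A \<Longrightarrow> g \<in> A \<Longrightarrow> (\<lambda>x. f x + g x) \<in> A"
  using R.a_closed by simp

lemma mult_mem: "f \<in> A \<Longrightarrow> g \<in> A \<Longrightarrow> (\<lambda>x. f x * g x) \<in> A"
  using R.m_closed by simp

lemma scale_mem: "f \<in> A \<Longrightarrow> (\<lambda>x. c * f x) \<in> A"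
  using mult_mem[OF const_mem] .

lemma sum_mem: "finite S \<Longrightarrow> (\<And>i. i \<in> S \<Longrightarrow> f i \<in> A) \<Longrightarrow> (\<lambda>x. \<Sum>i\<in>S. f i x) \<in> A"
  by (induction S rule: finite_induct) (auto intro: const_mem add_mem)

lemma prod_mem: "finite S \<Longrightarrow> (\<And>i. i \<in> S \<Longrightarrow> f i \<in> A) \<Longrightarrow> (\<lambda>x. \<Prod>i\<in>S. f i x) \<in> A"
  by (induction S rule: finite_induct) (auto intro: const_mem mult_mem)

lemma det_mem:
  assumes "\<And>x. E x \<in> carrier_mat n n"
    and "\<And>i j. i < n \<Longrightarrow> j < n \<Longrightarrow> (\<lambda>x. E x $$ (i, j)) \<in> A"
  shows "(\<lambda>x. det (E x)) \<in> A"
proof -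
  have "(\<lambda>x. \<Prod>i = 0..<n. E x $$ (i, \<pi> i)) \<in> A" if "\<pi> permutes {0..<n}" for \<pi>
    using assms(2) permutes_in_image[OF that] by (auto intro: prod_mem)
  then have "(\<lambda>x. \<Sum>\<pi> | \<pi> permutes {0..<n}. signof \<pi> * (\<Prod>i = 0..<n. E x $$ (i, \<pi> i))) \<in> A"
    by (auto intro!: sum_mem scale_mem simp: finite_permutations)
  then show ?thesis
    using det_def'[OF assms(1)] by simp
qed

lemma cancel:
  assumes "f \<in> A" "f \<noteq> (\<lambda>_. 0)" "g \<in> A" "h \<in> A" "\<And>x. f x * g x = f x * h x"
  shows "g = h"
  using R.m_lcancel[of f g h] assms by (simp add: fun_eq_iff)

lemma eq_if_eq_off_zeros:
  assumes "D \<in> A" "D \<noteq> (\<lambda>_. 0)" "g \<in> A" "h \<in> A" "\<And>x. D x \<noteq> 0 \<Longrightarrow> g x = h x"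
  shows "g = h"
  using cancel[OF assms(1-4)] assms(5) by (metis mult_zero_left)

end

definition lin_relation ::
    "nat \<Rightarrow> nat \<Rightarrow> (nat \<Rightarrow> 'x \<Rightarrow> nat \<Rightarrow> 'k::field) \<Rightarrow> ('x \<Rightarrow> nat \<Rightarrow> 'k) \<Rightarrow> (nat \<Rightarrow> 'x \<Rightarrow> 'k) \<Rightarrow> bool"
  where "lin_relation m n \<phi> \<psi> h \<longleftrightarrow> (\<forall>x. \<forall>j<m. h 0 x * \<psi> x j = (\<Sum>i=1..n. h i x * \<phi> i x j))"

lemma lin_relation_mult:
  assumes "lin_relation m n \<phi> \<psi> p" "\<And>i. i \<le> n \<Longrightarrow> h i = (\<lambda>x. g x * p i x)"
  shows "lin_relation m n \<phi> \<psi> h"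
  unfolding lin_relation_def
proof (intro allI impI)
  fix x j assume "j < m"
  have "h 0 x * \<psi> x j = g x * (p 0 x * \<psi> x j)"
    using assms(2) by simp
  also have "\<dots> = (\<Sum>i=1..n. g x * (p i x * \<phi> i x j))"
    using assms(1) \<open>j < m\<close> by (simp add: lin_relation_def sum_distrib_left)
  also have "\<dots> = (\<Sum>i=1..n. h i x * \<phi> i x j)"
    using assms(2) by (intro sum.cong) auto
  finally show "h 0 x * \<psi> x j = (\<Sum>i=1..n. h i x * \<phi> i x j)" .
qed

lemma lin_indep_relations_cross_eq:
  assumes "lin_indep m n v"
    and "\<forall>j<m. a 0 * w j = (\<Sum>i=1..n. a i * v i j)"
    and "\<forall>j<m. b 0 * w j = (\<Sum>i=1..n. b i * v i j)"
    and "i \<le> n"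
  shows "a 0 * b i = b 0 * a i"
proof (cases "i = 0")
  case False
  have "(\<Sum>i=1..n. (a 0 * b i - b 0 * a i) * v i j) = 0" if "j < m" for j
  proof -
    have "(\<Sum>i=1..n. (a 0 * b i - b 0 * a i) * v i j)
        = a 0 * (\<Sum>i=1..n. b i * v i j) - b 0 * (\<Sum>i=1..n. a i * v i j)"
      by (simp add: algebra_simps sum_subtractf sum_distrib_left)
    also have "\<dots> = a 0 * (b 0 * w j) - b 0 * (a 0 * w j)"
      using assms(2)[rule_format, OF that] assms(3)[rule_format, OF that] by simp
    finally show ?thesis
      by (simp add: mult.left_commute)
  qed
  moreover have "(\<forall>j<m. (\<Sum>i=1..n. (a 0 * b i - b 0 * a i) * v i j) = 0)
      \<longrightarrow> (\<forall>i\<in>{1..n}. a 0 * b i - b 0 * a i = 0)"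
    using assms(1) unfolding lin_indep_def by (rule spec)
  ultimately show ?thesis
    using assms(4) False by simp
qed simp

section \<open>Coordinates with respect to linear functionals\<close>

lemma sum_fun_apply: "finite S \<Longrightarrow> (\<Sum>i\<in>S. f i) x = (\<Sum>i\<in>S. f i x)"
  by (induction S rule: finite_induct) auto

lemma lin_indep_left_inverse:
  fixes v :: "nat \<Rightarrow> nat \<Rightarrow> 'k::field"
  assumes indep: "lin_indep m n v"
  obtains B where "\<And>k i. k \<in> {1..n} \<Longrightarrow> i \<in> {1..n} \<Longrightarrow> (\<Sum>j<m. B k j * v i j) = (if k = i then 1 else 0)"
proof -
  define scale where "scale = (\<lambda>c (w :: nat \<Rightarrow> 'k) i. c * w i)"
  interpret V: vector_space scale
    by unfold_locales (auto simp: scale_def fun_eq_iff plus_fun_def algebra_simps)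
  interpret VV: vector_space_pair scale scale ..
  define e where "e = (\<lambda>i k :: nat. if k = i then 1 else 0 :: 'k)"
  define f where "f = (\<lambda>c (j :: nat). if j < m then \<Sum>i=1..n. c i * v i j else 0)"
  have lin_f: "Vector_Spaces.linear scale scale f"
    unfolding Vector_Spaces.linear_iff using V.vector_space_axioms
    by (auto simp: scale_def f_def fun_eq_iff plus_fun_def sum.distrib algebra_simps sum_distrib_left)
  define U where "U = {c :: nat \<Rightarrow> 'k. \<forall>i. i \<notin> {1..n} \<longrightarrow> c i = 0}"
  have U: "V.subspace U"
    unfolding V.subspace_def U_def by (auto simp: scale_def)
  have "c = 0" if "c \<in> U" "f c = 0" for c
  proof -
    have "(\<Sum>i=1..n. c i * v i j) = 0" if "j < m" for j
      using fun_cong[OF \<open>f c = 0\<close>, of j] that by (simp add: f_def)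
    then have "\<forall>i\<in>{1..n}. c i = 0"
      using indep unfolding lin_indep_def by blast
    then show ?thesis
      using \<open>c \<in> U\<close> by (auto simp: U_def fun_eq_iff)
  qed
  then have "inj_on f U"
    using VV.linear_inj_on_iff_eq_0[OF lin_f U] by blast
  (* a linear left inverse g of the coefficient map f yields the functionals B k j = g (e j) k *)
  then obtain g where lin_g: "Vector_Spaces.linear scale scale g" and g: "\<And>c. c \<in> U \<Longrightarrow> g (f c) = c"
    using VV.linear_exists_left_inverse_on[OF lin_f U] by blast
  have "(\<Sum>j<m. g (e j) k * v i j) = (if k = i then 1 else 0)" if "i \<in> {1..n}" for k i
  proof -
    have "(\<Sum>i'=1..n. e i i' * v i' j) = v i j" for j
      using that by (simp add: e_def if_distrib[of "\<lambda>y. y * v _ j"] sum.delta cong: if_cong)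
    then have "f (e i) = (\<Sum>j<m. scale (v i j) (e j))"
      by (simp add: fun_eq_iff f_def e_def scale_def sum_fun_apply if_distrib[of "\<lambda>y. v i _ * y"]
          sum.delta' cong: if_cong)
    moreover have "e i = g (f (e i))"
      using g[of "e i"] that by (simp add: U_def e_def)
    ultimately have "e i = (\<Sum>j<m. scale (v i j) (g (e j)))"
      by (simp add: VV.linear_sum[OF lin_g] VV.linear_scale[OF lin_g])
    then show ?thesis
      by (auto simp: fun_eq_iff scale_def e_def sum_fun_apply mult.commute dest: spec[of _ k])
  qed
  then show thesis
    by (intro that[of "\<lambda>k j. g (e j) k"]) simp
qed

(* The families are indexed by 1..n, matrices and vectors of Jordan_Normal_Form by 0..<n:
   row r and column s stand for the functional B (r + 1) and the vector v (s + 1). *)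
definition coord_mat :: "nat \<Rightarrow> nat \<Rightarrow> (nat \<Rightarrow> nat \<Rightarrow> 'k::field) \<Rightarrow> (nat \<Rightarrow> nat \<Rightarrow> 'k) \<Rightarrow> 'k mat"
  where "coord_mat m n B v = mat n n (\<lambda>(r, s). \<Sum>j<m. B (Suc r) j * v (Suc s) j)"

definition coord_vec :: "nat \<Rightarrow> nat \<Rightarrow> (nat \<Rightarrow> nat \<Rightarrow> 'k::field) \<Rightarrow> (nat \<Rightarrow> 'k) \<Rightarrow> 'k vec"
  where "coord_vec m n B w = vec n (\<lambda>r. \<Sum>j<m. B (Suc r) j * w j)"

definition cramer_det ::
    "nat \<Rightarrow> nat \<Rightarrow> (nat \<Rightarrow> nat \<Rightarrow> 'k::field) \<Rightarrow> (nat \<Rightarrow> nat \<Rightarrow> 'k) \<Rightarrow> (nat \<Rightarrow> 'k) \<Rightarrow> nat \<Rightarrow> 'k"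
  where "cramer_det m n B v w i = det (replace_col (coord_mat m n B v) (coord_vec m n B w) (i - 1))"

lemma dim_coord_mat [simp]:
  "dim_row (coord_mat m n B v) = n" "dim_col (coord_mat m n B v) = n"
  by (simp_all add: coord_mat_def)

lemma coord_mat_carrier [simp]: "coord_mat m n B v \<in> carrier_mat n n"
  by (simp add: carrier_matI)

lemma coord_mat_mult_vec:
  "coord_mat m n B v *\<^sub>v vec n (\<lambda>s. c (Suc s)) = coord_vec m n B (\<lambda>j. \<Sum>i=1..n. c i * v i j)"
proof (rule eq_vecI)
  fix r assume "r < dim_vec (coord_vec m n B (\<lambda>j. \<Sum>i=1..n. c i * v i j))"
  then have "r < n"
    by (simp add: coord_vec_def)
  have "(\<Sum>s<n. (\<Sum>j<m. B (Suc r) j * v (Suc s) j) * c (Suc s))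
      = (\<Sum>j<m. B (Suc r) j * (\<Sum>s<n. c (Suc s) * v (Suc s) j))"
    by (simp add: sum_distrib_left sum_distrib_right sum.swap[of _ "{..<n}"] mult_ac)
  also have "\<dots> = (\<Sum>j<m. B (Suc r) j * (\<Sum>i=1..n. c i * v i j))"
    by (simp add: sum.atLeast1_atMost_eq)
  finally show "(coord_mat m n B v *\<^sub>v vec n (\<lambda>s. c (Suc s))) $ r
      = coord_vec m n B (\<lambda>j. \<Sum>i=1..n. c i * v i j) $ r"
    using \<open>r < n\<close> by (simp add: coord_mat_def coord_vec_def scalar_prod_def atLeast0LessThan)
qed (simp add: coord_mat_def coord_vec_def)

lemma coord_mat_eq_one:
  assumes "\<And>k i. k \<in> {1..n} \<Longrightarrow> i \<in> {1..n} \<Longrightarrow> (\<Sum>j<m. B k j * v i j) = (if k = i then 1 else 0)"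
  shows "coord_mat m n B v = 1\<^sub>m n"
  using assms by (intro eq_matI) (auto simp: coord_mat_def)

lemma lin_indep_if_det_coord_mat:
  assumes "det (coord_mat m n B v) \<noteq> 0"
  shows "lin_indep m n v"
  unfolding lin_indep_def
proof (intro allI impI ballI)
  fix c i assume c: "\<forall>j<m. (\<Sum>i=1..n. c i * v i j) = 0" and i: "i \<in> {1..n}"
  have "coord_mat m n B v *\<^sub>v vec n (\<lambda>s. c (Suc s)) = 0\<^sub>v n"
    using c by (auto simp: coord_mat_mult_vec coord_vec_def)
  with assms have "vec n (\<lambda>s. c (Suc s)) = 0\<^sub>v n"
    unfolding det_0_iff_vec_prod_zero[OF coord_mat_carrier] using vec_carrier by blast
  then have "vec n (\<lambda>s. c (Suc s)) $ (i - 1) = 0"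
    using i by auto
  moreover have "i - 1 < n" "Suc (i - 1) = i"
    using i by auto
  ultimately show "c i = 0"
    by (metis index_vec)
qed

lemma lin_dep_with_imp_combination:
  assumes "lin_indep m n v" "lin_dep_with m n v w"
  obtains d where "\<And>j. j < m \<Longrightarrow> w j = (\<Sum>i=1..n. d i * v i j)"
proof -
  obtain c c0 where nontrivial: "c0 \<noteq> 0 \<or> (\<exists>i\<in>{1..n}. c i \<noteq> 0)"
    and rel: "\<forall>j<m. c0 * w j + (\<Sum>i=1..n. c i * v i j) = 0"
    using assms(2) unfolding lin_dep_with_def by blast
  have "c0 \<noteq> 0"
    using nontrivial rel assms(1) unfolding lin_indep_def by auto
  have "w j = (\<Sum>i=1..n. (- c i / c0) * v i j)" if "j < m" for j
  proof -
    have "c0 * w j = - (\<Sum>i=1..n. c i * v i j)"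
      using rel that by (simp add: eq_neg_iff_add_eq_0)
    then have "w j = - (\<Sum>i=1..n. c i * v i j) / c0"
      using \<open>c0 \<noteq> 0\<close> by (simp add: field_simps)
    then show ?thesis
      by (simp add: sum_divide_distrib sum_negf[symmetric])
  qed
  then show thesis
    by (rule that)
qed

lemma det_coord_mat_mult_eq_cramer:
  assumes "det (coord_mat m n B v) \<noteq> 0" "lin_dep_with m n v w" "j < m"
  shows "det (coord_mat m n B v) * w j = (\<Sum>i=1..n. cramer_det m n B v w i * v i j)"
proof -
  obtain d where d: "\<And>j. j < m \<Longrightarrow> w j = (\<Sum>i=1..n. d i * v i j)"
    using lin_dep_with_imp_combination[OF lin_indep_if_det_coord_mat[OF assms(1)] assms(2)] by blast
  have w_coords: "coord_vec m n B w = coord_mat m n B v *\<^sub>v vec n (\<lambda>s. d (Suc s))"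
    using d by (simp add: coord_mat_mult_vec coord_vec_def)
  have "cramer_det m n B v w i = d i * det (coord_mat m n B v)" if "i \<in> {1..n}" for i
  proof -
    have "i - 1 < n" "Suc (i - 1) = i"
      using that by auto
    then show ?thesis
      using cramer_lemma_mat[OF coord_mat_carrier[of m n B v] vec_carrier, of "i - 1"]
      by (simp add: cramer_det_def w_coords)
  qed
  then have "(\<Sum>i=1..n. cramer_det m n B v w i * v i j) = det (coord_mat m n B v) * (\<Sum>i=1..n. d i * v i j)"
    by (simp add: sum_distrib_left mult_ac)
  then show ?thesis
    using d[OF assms(3)] by simp
qed

section \<open>Relations between regular maps\<close>

locale regular_maps = fun_domain A for A :: "('x \<Rightarrow> 'k::field) set" +
  fixes m n :: nat
    and \<phi> :: "nat \<Rightarrow> 'x \<Rightarrow> nat \<Rightarrow> 'k"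
    and \<psi> :: "'x \<Rightarrow> nat \<Rightarrow> 'k"
  assumes \<phi>_mem: "\<And>i j. i \<in> {1..n} \<Longrightarrow> j < m \<Longrightarrow> (\<lambda>x. \<phi> i x j) \<in> A"
    and \<psi>_mem: "\<And>j. j < m \<Longrightarrow> (\<lambda>x. \<psi> x j) \<in> A"
begin

lemma coord_mat_entry_mem:
  "r < n \<Longrightarrow> s < n \<Longrightarrow> (\<lambda>x. coord_mat m n B (\<lambda>i. \<phi> i x) $$ (r, s)) \<in> A"
  by (auto simp: coord_mat_def intro!: sum_mem scale_mem \<phi>_mem)

lemma coord_vec_entry_mem: "r < n \<Longrightarrow> (\<lambda>x. coord_vec m n B (\<psi> x) $ r) \<in> A"
  by (auto simp: coord_vec_def intro!: sum_mem scale_mem \<psi>_mem)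

lemma det_coord_mat_mem: "(\<lambda>x. det (coord_mat m n B (\<lambda>i. \<phi> i x))) \<in> A"
  by (rule det_mem[OF coord_mat_carrier coord_mat_entry_mem])

lemma cramer_det_mem: "(\<lambda>x. cramer_det m n B (\<lambda>i. \<phi> i x) (\<psi> x) i) \<in> A"
  unfolding cramer_det_def
proof (rule det_mem[where n = n])
  fix r s assume "r < n" "s < n"
  then show "(\<lambda>x. replace_col (coord_mat m n B (\<lambda>i. \<phi> i x)) (coord_vec m n B (\<psi> x)) (i - 1) $$ (r, s)) \<in> A"
    using coord_mat_entry_mem coord_vec_entry_mem
    by (cases "s = i - 1") (simp_all add: replace_col_def)
qed (simp add: replace_col_def carrier_matI)

lemma lin_relation_if_off_zeros:
  assumes "D \<in> A" "D \<noteq> (\<lambda>_. 0)" "\<And>i. i \<le> n \<Longrightarrow> h i \<in> A"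
    and "\<And>x j. D x \<noteq> 0 \<Longrightarrow> j < m \<Longrightarrow> h 0 x * \<psi> x j = (\<Sum>i=1..n. h i x * \<phi> i x j)"
  shows "lin_relation m n \<phi> \<psi> h"
proof -
  have "(\<lambda>x. h 0 x * \<psi> x j) = (\<lambda>x. \<Sum>i=1..n. h i x * \<phi> i x j)" if "j < m" for j
    using assms \<phi>_mem \<psi>_mem that
    by (intro eq_if_eq_off_zeros[of D]) (auto intro!: mult_mem sum_mem)
  then show ?thesis
    unfolding lin_relation_def by meson
qed

lemma lin_relation_cancel:
  assumes "d \<in> A" "d \<noteq> (\<lambda>_. 0)" "\<And>i. i \<le> n \<Longrightarrow> e i \<in> A \<and> p i = (\<lambda>x. d x * e i x)"
    and "lin_relation m n \<phi> \<psi> p"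
  shows "lin_relation m n \<phi> \<psi> e"
proof (rule lin_relation_if_off_zeros[OF assms(1,2)])
  fix x j assume "d x \<noteq> 0" "j < m"
  have "d x * (e 0 x * \<psi> x j) = p 0 x * \<psi> x j"
    using assms(3)[of 0] by simp
  also have "\<dots> = (\<Sum>i=1..n. d x * (e i x * \<phi> i x j))"
    using assms(3,4) \<open>j < m\<close> unfolding lin_relation_def by (auto intro!: sum.cong)
  finally show "e 0 x * \<psi> x j = (\<Sum>i=1..n. e i x * \<phi> i x j)"
    using \<open>d x \<noteq> 0\<close> by (simp add: sum_distrib_left[symmetric])
qed (use assms(3) in blast)

lemma exists_coprime_lin_relation:
  assumes "factorial_domain (fun_ring A)"
    and "\<And>i. i \<le> n \<Longrightarrow> q i \<in> A" "q 0 \<noteq> (\<lambda>_. 0)" "lin_relation m n \<phi> \<psi> q"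
  obtains p where "\<And>i. i \<le> n \<Longrightarrow> p i \<in> A" "p 0 \<noteq> (\<lambda>_. 0)"
    "coprime_family (fun_ring A) {..n} p" "lin_relation m n \<phi> \<psi> p"
proof -
  define S where "S = {h. (\<forall>i\<le>n. h i \<in> A) \<and> lin_relation m n \<phi> \<psi> h}"
  have "\<exists>p\<in>S. p 0 \<noteq> \<zero>\<^bsub>fun_ring A\<^esub> \<and> coprime_family (fun_ring A) {..n} p"
  proof (rule factorial_domain.exists_coprime_member[OF assms(1), of q S 0])
    fix h d e
    assume "h \<in> S" "d \<in> carrier (fun_ring A) - {\<zero>\<^bsub>fun_ring A\<^esub>}"
      "\<And>i. i \<in> {..n} \<Longrightarrow> e i \<in> carrier (fun_ring A) \<and> h i = d \<otimes>\<^bsub>fun_ring A\<^esub> e i"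
    then show "e \<in> S"
      using lin_relation_cancel[of d e h] by (auto simp: S_def)
  qed (use assms(2-4) in \<open>auto simp: S_def\<close>)
  then show thesis
    using that by (auto simp: S_def)
qed

lemma exists_cramer_relation:
  assumes "lin_indep m n (\<lambda>i. \<phi> i x0)" "\<And>x. lin_dep_with m n (\<lambda>i. \<phi> i x) (\<psi> x)"
  obtains D q where "D \<in> A" "D \<noteq> (\<lambda>_. 0)" "\<And>x. D x \<noteq> 0 \<Longrightarrow> lin_indep m n (\<lambda>i. \<phi> i x)"
    and "\<And>i. q i \<in> A" "q 0 = D" "lin_relation m n \<phi> \<psi> q"
proof -
  obtain B where B: "\<And>k i. k \<in> {1..n} \<Longrightarrow> i \<in> {1..n} \<Longrightarrow>
      (\<Sum>j<m. B k j * \<phi> i x0 j) = (if k = i then 1 else 0)"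
    using lin_indep_left_inverse[OF assms(1)] by blast
  define D where "D = (\<lambda>x. det (coord_mat m n B (\<lambda>i. \<phi> i x)))"
  define q where "q = (\<lambda>i. if i = 0 then D else (\<lambda>x. cramer_det m n B (\<lambda>i. \<phi> i x) (\<psi> x) i))"
  have "D x0 = 1"
    using coord_mat_eq_one[OF B] by (simp add: D_def)
  then have D_nonzero: "D \<noteq> (\<lambda>_. 0)"
    by (auto dest: fun_cong[of _ _ x0])
  have D_mem: "D \<in> A"
    using det_coord_mat_mem by (simp add: D_def)
  then have q_mem: "q i \<in> A" for i
    using cramer_det_mem by (simp add: q_def)
  have indep: "lin_indep m n (\<lambda>i. \<phi> i x)" if "D x \<noteq> 0" for x
    using that lin_indep_if_det_coord_mat by (simp add: D_def)
  have "q 0 = D"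
    by (simp add: q_def)
  moreover have "lin_relation m n \<phi> \<psi> q"
  proof (rule lin_relation_if_off_zeros[OF D_mem D_nonzero q_mem])
    fix x j assume "D x \<noteq> 0" "j < m"
    have "(\<Sum>i=1..n. q i x * \<phi> i x j) = (\<Sum>i=1..n. cramer_det m n B (\<lambda>i. \<phi> i x) (\<psi> x) i * \<phi> i x j)"
      by (rule sum.cong) (auto simp: q_def)
    then show "q 0 x * \<psi> x j = (\<Sum>i=1..n. q i x * \<phi> i x j)"
      using det_coord_mat_mult_eq_cramer[OF _ assms(2) \<open>j < m\<close>] \<open>D x \<noteq> 0\<close>
      by (simp add: q_def D_def)
  qed
  ultimately show thesis
    using that D_mem D_nonzero indep q_mem by blast
qed

lemma lin_relation_iff_multiple:
  assumes "factorial_domain (fun_ring A)"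
    and "D \<in> A" "D \<noteq> (\<lambda>_. 0)" "\<And>x. D x \<noteq> 0 \<Longrightarrow> lin_indep m n (\<lambda>i. \<phi> i x)"
    and p: "\<And>i. i \<le> n \<Longrightarrow> p i \<in> A" "p 0 \<noteq> (\<lambda>_. 0)" "coprime_family (fun_ring A) {..n} p"
      "lin_relation m n \<phi> \<psi> p"
    and h: "\<And>i. i \<le> n \<Longrightarrow> h i \<in> A"
  shows "lin_relation m n \<phi> \<psi> h \<longleftrightarrow> (\<exists>g\<in>A. \<forall>i\<le>n. h i = (\<lambda>x. g x * p i x))"
proof
  assume rel: "lin_relation m n \<phi> \<psi> h"
  have cross: "(\<lambda>x. p 0 x * h i x) = (\<lambda>x. h 0 x * p i x)" if "i \<le> n" for i
  proof (rule eq_if_eq_off_zeros[OF assms(2,3)])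
    fix x assume "D x \<noteq> 0"
    have "\<forall>j<m. p 0 x * \<psi> x j = (\<Sum>i=1..n. p i x * \<phi> i x j)"
      "\<forall>j<m. h 0 x * \<psi> x j = (\<Sum>i=1..n. h i x * \<phi> i x j)"
      using p(4) rel unfolding lin_relation_def by simp_all
    then show "p 0 x * h i x = h 0 x * p i x"
      by (rule lin_indep_relations_cross_eq[OF assms(4)[OF \<open>D x \<noteq> 0\<close>] _ _ that])
  qed (use p(1) h that in \<open>auto intro: mult_mem\<close>)
  have "p 0 divides\<^bsub>fun_ring A\<^esub> h 0"
  proof (rule factorial_domain.divides_if_coprime_family[OF assms(1), where c = p and I = "{..n}"])
    show "p 0 divides\<^bsub>fun_ring A\<^esub> h 0 \<otimes>\<^bsub>fun_ring A\<^esub> p i" if "i \<in> {..n}" for i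
      using cross[of i, symmetric] h[of i] that by (auto simp: divides_fun_ring_iff)
  qed (use p h in auto)
  then obtain g where g: "g \<in> A" "h 0 = (\<lambda>x. p 0 x * g x)"
    by (auto simp: divides_fun_ring_iff)
  have "h i = (\<lambda>x. g x * p i x)" if "i \<le> n" for i
  proof (rule cancel[of "p 0"])
    fix x
    show "p 0 x * h i x = p 0 x * (g x * p i x)"
      using fun_cong[OF cross[OF that], of x] g(2) by (simp add: mult_ac)
  qed (use p(1,2) h g(1) that in \<open>auto intro: mult_mem\<close>)
  then show "\<exists>g\<in>A. \<forall>i\<le>n. h i = (\<lambda>x. g x * p i x)"
    using g(1) by blast
next
  assume "\<exists>g\<in>A. \<forall>i\<le>n. h i = (\<lambda>x. g x * p i x)"
  then show "lin_relation m n \<phi> \<psi> h"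
    using lin_relation_mult[OF p(4)] by blast
qed

end

theorem lemma3p3:
  fixes A :: "('x \<Rightarrow> 'k::field) set"
    and m n :: nat
    and \<phi> :: "nat \<Rightarrow> 'x \<Rightarrow> nat \<Rightarrow> 'k"
    and \<psi> :: "'x \<Rightarrow> nat \<Rightarrow> 'k"
  assumes "alg_closed TYPE('k)"
    and "affine_coord_ring A"
    and "domain (fun_ring A)"
    and "factorial_domain (fun_ring A)"
    and "\<forall>i\<in>{1..n}. \<forall>j<m. (\<lambda>x. \<phi> i x j) \<in> A"
    and "\<forall>j<m. (\<lambda>x. \<psi> x j) \<in> A"
    and "\<exists>x. lin_indep m n (\<lambda>i. \<phi> i x)"
    and "\<forall>x. lin_dep_with m n (\<lambda>i. \<phi> i x) (\<psi> x)"
  shows "\<exists>p :: nat \<Rightarrow> 'x \<Rightarrow> 'k.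
           (\<forall>i\<le>n. p i \<in> A) \<and>
           (\<forall>d\<in>A. (\<forall>i\<le>n. d divides\<^bsub>fun_ring A\<^esub> p i) \<longrightarrow> d \<in> Units (fun_ring A)) \<and>
           (\<forall>x. \<forall>j<m. p 0 x * \<psi> x j = (\<Sum>i=1..n. p i x * \<phi> i x j)) \<and>
           (\<forall>h :: nat \<Rightarrow> 'x \<Rightarrow> 'k. (\<forall>i\<le>n. h i \<in> A) \<longrightarrow>
              ((\<forall>x. \<forall>j<m. h 0 x * \<psi> x j = (\<Sum>i=1..n. h i x * \<phi> i x j)) \<longleftrightarrow>
               (\<exists>g\<in>A. \<forall>i\<le>n. h i = (\<lambda>x. g x * p i x))))"
proof -
  obtain G where "A = alg_gen G"
    using assms(2) unfolding affine_coord_ring_def by blast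
  then interpret regular_maps A m n \<phi> \<psi>
    using assms(3,5,6)
    by (intro regular_maps.intro fun_domain.intro regular_maps_axioms.intro) (auto intro: alg_gen.const)
  obtain x0 where "lin_indep m n (\<lambda>i. \<phi> i x0)"
    using assms(7) by blast
  then obtain D q where D: "D \<in> A" "D \<noteq> (\<lambda>_. 0)" "\<And>x. D x \<noteq> 0 \<Longrightarrow> lin_indep m n (\<lambda>i. \<phi> i x)"
    and q: "\<And>i. q i \<in> A" "q 0 = D" "lin_relation m n \<phi> \<psi> q"
    using exists_cramer_relation assms(8) by metis
  obtain p where p: "\<And>i. i \<le> n \<Longrightarrow> p i \<in> A" "p 0 \<noteq> (\<lambda>_. 0)"
    "coprime_family (fun_ring A) {..n} p" "lin_relation m n \<phi> \<psi> p"
    by (rule exists_coprime_lin_relation[OF assms(4), of q]) (use q D(2) in auto)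
  have "\<forall>h. (\<forall>i\<le>n. h i \<in> A) \<longrightarrow> (lin_relation m n \<phi> \<psi> h \<longleftrightarrow> (\<exists>g\<in>A. \<forall>i\<le>n. h i = (\<lambda>x. g x * p i x)))"
    using lin_relation_iff_multiple[OF assms(4) D] p by blast
  with p show ?thesis
    unfolding lin_relation_def coprime_family_def by (intro exI[of _ p]) auto
qed

end
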